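(* Let $\mathcal S_1$ and $\mathcal S_2$ be qubit spin substitutions with digit sets $\mathcal D_1,\mathcal D_2$, spin matrices $W_1,W_2$ and spin groups $G_1,G_2$. Let $\mathcal S$ be a qubit spin substitution with spin group $G=G_1\times G_2$ on a digit system $(Q,\mathcal D)$ (in any dimension) with $|\mathcal D|=|\mathcal D_1|\cdot|\mathcal D_2|$, where via a bijection $\mathcal D\to\mathcal D_1\times\mathcal D_2$, $\vec d\mapsto(\vec d_1,\vec d_2)$, the spin matrix is $W(\vec d,\vec d')=(W_1(\vec d_1,\vec d_1'),W_2(\vec d_2,\vec d_2'))$ (i.e. $W=W_1\otimes W_2$). Then: (1) $\mathcal S$ is primitive if and only if $\mathcal S_1$ and $\mathcal S_2$ are both primitive. (2) Let $\chi=\chi_1\otimes\chi_2\in\widehat{G_1\times G_2}$ with $\chi_i\in\widehat{G_i}$. Then $\mathcal S$ is $\chi$-unitary if and only if $\mathcal S_1$ is $\chi_1$-unitary and $\mathcal S_2$ is $\chi_2$-unitary; and $\mathcal S$ is $\chi$-rank-1 if and only if $\mathcal S_1$ is $\chi_1$-rank-1 and $\mathcal S_2$ is $\chi_2$-rank-1.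
   Context: A digit system $(Q,\mathcal D)$: $Q$ an expansive endomorphism of $\mathbb Z^m$, $\mathcal D$ a complete set of coset representatives of $\mathbb Z^m/Q\mathbb Z^m$. A qubit spin substitution given by $(Q,\mathcal D)$, a finite abelian group $G$ and $W:\mathcal D\times\mathcal D\to G$ has alphabet $G\times\mathcal D$ (letters $g\mathsf d$) and rule $\mathcal S(g\mathsf d,\vec d')=(gW(\vec d,\vec d'))\mathsf d'$. It is primitive if its substitution matrix $M_{\mathsf a\mathsf b}=\#\{\vec d:\mathcal S(\mathsf b,\vec d)=\mathsf a\}$ has a power with all entries positive. For $\chi\in\widehat G$, $\chi(W)=(\chi(W(\vec d,\vec d')))_{\vec d,\vec d'}$; $\mathcal S$ is $\chi$-unitary if $\frac{1}{\sqrt{|\mathcal D|}}\chi(W)$ is unitary and $\chi$-rank-1 if $\chi(W)$ has rank 1. $(\chi_1\otimes\chi_2)(g_1,g_2)=\chi_1(g_1)\chi_2(g_2)$. *)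

theory Defs
  imports "HOL-Analysis.Analysis" "HOL-Library.Product_Plus" "HOL-Library.Function_Algebras"
begin

definition expansive :: "int^'m^'m \<Rightarrow> bool" where
  "expansive Q \<longleftrightarrow>
     (\<forall>(lam::complex) (v::complex^'m). v \<noteq> 0 \<and> (\<chi> i j. of_int (Q$i$j)) *v v = lam *s v \<longrightarrow> 1 < cmod lam)"

definition complete_residue_system :: "int^'m^'m \<Rightarrow> (int^'m) set \<Rightarrow> bool" where
  "complete_residue_system Q D \<longleftrightarrow> (\<forall>z. \<exists>!d. d \<in> D \<and> (\<exists>y. z - d = Q *v y))"

definition digit_system :: "int^'m^'m \<Rightarrow> (int^'m) set \<Rightarrow> bool" where
  "digit_system Q D \<longleftrightarrow> expansive Q \<and> complete_residue_system Q D"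

definition alphabet :: "'d set \<Rightarrow> ('g \<times> 'd) set" where
  "alphabet D = UNIV \<times> D"

definition spin_subst :: "('d \<Rightarrow> 'd \<Rightarrow> 'g::ab_group_add) \<Rightarrow> 'g \<times> 'd \<Rightarrow> 'd \<Rightarrow> 'g \<times> 'd" where
  "spin_subst W b d' = (fst b + W (snd b) d', d')"

definition subst_matrix :: "'d set \<Rightarrow> ('d \<Rightarrow> 'd \<Rightarrow> 'g::ab_group_add) \<Rightarrow> 'g \<times> 'd \<Rightarrow> 'g \<times> 'd \<Rightarrow> nat" where
  "subst_matrix D W a b = card {d' \<in> D. spin_subst W b d' = a}"

fun mat_pow :: "'a set \<Rightarrow> ('a \<Rightarrow> 'a \<Rightarrow> nat) \<Rightarrow> nat \<Rightarrow> 'a \<Rightarrow> 'a \<Rightarrow> nat" where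
  "mat_pow A M 0 = (\<lambda>a b. if a = b then 1 else 0)"
| "mat_pow A M (Suc k) = (\<lambda>a c. \<Sum>b\<in>A. M a b * mat_pow A M k b c)"

definition primitive :: "'d set \<Rightarrow> ('d \<Rightarrow> 'd \<Rightarrow> 'g::ab_group_add) \<Rightarrow> bool" where
  "primitive D W \<longleftrightarrow>
     (\<exists>k\<ge>1. \<forall>a\<in>alphabet D. \<forall>b\<in>alphabet D. 0 < mat_pow (alphabet D) (subst_matrix D W) k a b)"

definition character :: "('g::ab_group_add \<Rightarrow> complex) \<Rightarrow> bool" where
  "character chi \<longleftrightarrow> (\<forall>a b. chi (a + b) = chi a * chi b) \<and> (\<forall>a. cmod (chi a) = 1)"

definition char_tensor :: "('g1 \<Rightarrow> complex) \<Rightarrow> ('g2 \<Rightarrow> complex) \<Rightarrow> 'g1 \<times> 'g2 \<Rightarrow> complex" where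
  "char_tensor chi1 chi2 g = chi1 (fst g) * chi2 (snd g)"

definition unitary_on :: "'d set \<Rightarrow> ('d \<Rightarrow> 'd \<Rightarrow> complex) \<Rightarrow> bool" where
  "unitary_on D U \<longleftrightarrow>
     (\<forall>d\<in>D. \<forall>d'\<in>D. (\<Sum>e\<in>D. U d e * cnj (U d' e)) = (if d = d' then 1 else 0)) \<and>
     (\<forall>d\<in>D. \<forall>d'\<in>D. (\<Sum>e\<in>D. cnj (U e d) * U e d') = (if d = d' then 1 else 0))"

text \<open>Rank = dimension of the column space (columns as functions D -> C, zero outside D).\<close>
definition rank_on :: "'d set \<Rightarrow> ('d \<Rightarrow> 'd \<Rightarrow> complex) \<Rightarrow> nat" where
  "rank_on D A = vector_space.dim (\<lambda>(c::complex) (f::'d \<Rightarrow> complex). (\<lambda>x. c * f x))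
                   ((\<lambda>e. (\<lambda>d. if d \<in> D then A d e else 0)) ` D)"

definition chi_matrix :: "('g \<Rightarrow> complex) \<Rightarrow> ('d \<Rightarrow> 'd \<Rightarrow> 'g) \<Rightarrow> 'd \<Rightarrow> 'd \<Rightarrow> complex" where
  "chi_matrix chi W d d' = chi (W d d')"

definition chi_unitary :: "'d set \<Rightarrow> ('d \<Rightarrow> 'd \<Rightarrow> 'g) \<Rightarrow> ('g \<Rightarrow> complex) \<Rightarrow> bool" where
  "chi_unitary D W chi \<longleftrightarrow>
     unitary_on D (\<lambda>d d'. chi_matrix chi W d d' / complex_of_real (sqrt (real (card D))))"

definition chi_rank1 :: "'d set \<Rightarrow> ('d \<Rightarrow> 'd \<Rightarrow> 'g) \<Rightarrow> ('g \<Rightarrow> complex) \<Rightarrow> bool" where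
  "chi_rank1 D W chi \<longleftrightarrow> rank_on D (chi_matrix chi W) = 1"

end

theory Submission
  imports Defs
begin

text \<open>
  A letter \<open>(h, d)\<close> occurs in the \<open>k\<close>-th iterate of the substitution at \<open>(g, d0)\<close> exactly when
  \<open>h - g\<close> is the total spin \<open>W d0 d1 + ... + W d(k-1) d\<close> of a walk \<open>d0, ..., dk = d\<close> in \<open>D\<close>.
  So \<open>S\<close> is primitive iff for some \<open>k\<close> every spin is realised by \<open>k\<close>-step walks between any two
  digits. Along the bijection \<open>D = D1 \<times> D2\<close> a walk is a pair of walks and, for \<open>W = W1 \<otimes> W2\<close>,
  its spin is the pair of spins, so the sets of realisable spins are products and primitivity
  splits into the factors.

  For \<open>\<chi> = \<chi>1 \<otimes> \<chi>2\<close> the matrix \<open>\<chi>(W)\<close> is the Kronecker product of \<open>\<chi>1(W1)\<close> and \<open>\<chi>2(W2)\<close>,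
  all three with unimodular entries. Such a matrix scaled by \<open>1/sqrt |D|\<close> is unitary iff its rows
  and its columns are orthogonal; inner products of rows of a Kronecker product factor, and the
  diagonal ones are the cardinalities \<open>|Di| \<noteq> 0\<close>. A matrix without zero entries has rank 1 iff all
  its 2x2 minors vanish, and for a Kronecker product this again splits into the factors.
\<close>

fun walk_spins :: "'d set \<Rightarrow> ('d \<Rightarrow> 'd \<Rightarrow> 'g::monoid_add) \<Rightarrow> nat \<Rightarrow> 'd \<Rightarrow> 'd \<Rightarrow> 'g set" where
  "walk_spins D W 0 d0 d = (if d0 = d \<and> d \<in> D then {0} else {})"
| "walk_spins D W (Suc k) d0 d =
     (if d \<in> D then (\<Union>z\<in>D. (\<lambda>g. g + W z d) ` walk_spins D W k d0 z) else {})"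

definition spin_connected :: "'d set \<Rightarrow> ('d \<Rightarrow> 'd \<Rightarrow> 'g::monoid_add) \<Rightarrow> nat \<Rightarrow> bool" where
  "spin_connected D W k \<longleftrightarrow> (\<forall>d0\<in>D. \<forall>d\<in>D. walk_spins D W k d0 d = UNIV)"

lemma translate_mem_image_iff:
  fixes x w :: "'g::group_add"
  shows "x \<in> (\<lambda>g. g + w) ` S \<longleftrightarrow> x - w \<in> S"
  by (auto simp: image_iff) (metis diff_add_cancel)

lemma subst_matrix_pos_iff:
  "0 < subst_matrix D W a b \<longleftrightarrow> snd a \<in> D \<and> fst a = fst b + W (snd b) (snd a)"
proof -
  have "{d' \<in> D. spin_subst W b d' = a} =
        (if snd a \<in> D \<and> fst a = fst b + W (snd b) (snd a) then {snd a} else {})"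
    by (cases a) (auto simp: spin_subst_def)
  then show ?thesis
    by (simp add: subst_matrix_def)
qed

lemma mat_pow_subst_matrix_pos_iff:
  fixes W :: "'d \<Rightarrow> 'd \<Rightarrow> 'g::{finite,ab_group_add}"
  assumes "finite D" and "a \<in> alphabet D" and "c \<in> alphabet D"
  shows "0 < mat_pow (alphabet D) (subst_matrix D W) k a c \<longleftrightarrow>
         fst a - fst c \<in> walk_spins D W k (snd c) (snd a)"
  using assms(2)
proof (induction k arbitrary: a)
  case 0
  then show ?case
    by (auto simp: alphabet_def prod_eq_iff)
next
  case (Suc k)
  have "finite (alphabet D :: ('g \<times> 'd) set)"
    using assms(1) by (simp add: alphabet_def)
  then have "0 < mat_pow (alphabet D) (subst_matrix D W) (Suc k) a c \<longleftrightarrow>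
      (\<exists>b\<in>alphabet D. 0 < subst_matrix D W a b \<and> 0 < mat_pow (alphabet D) (subst_matrix D W) k b c)"
    by (simp add: flip: neq0_conv)
  also have "\<dots> \<longleftrightarrow> (\<exists>z\<in>D. fst a - W z (snd a) - fst c \<in> walk_spins D W k (snd c) z)"
    using Suc by (force simp: alphabet_def subst_matrix_pos_iff)
  also have "\<dots> \<longleftrightarrow> fst a - fst c \<in> walk_spins D W (Suc k) (snd c) (snd a)"
    using Suc.prems by (auto simp: alphabet_def translate_mem_image_iff algebra_simps)
  finally show ?case .
qed

lemma primitive_iff_spin_connected:
  fixes W :: "'d \<Rightarrow> 'd \<Rightarrow> 'g::{finite,ab_group_add}"
  assumes "D \<noteq> {}"
  shows "primitive D W \<longleftrightarrow> finite D \<and> (\<exists>k\<ge>1. spin_connected D W k)"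
proof (cases "finite D")
  case False
  \<comment> \<open>then the sums defining \<open>mat_pow\<close> range over an infinite set and are \<open>0\<close>\<close>
  then have "infinite (alphabet D :: ('g \<times> 'd) set)"
    using assms by (auto simp: alphabet_def dest: finite_cartesian_productD2)
  then have "mat_pow (alphabet D) (subst_matrix D W) k a b = 0" if "k \<ge> 1" for k a b
    using that by (cases k) auto
  then show ?thesis
    using False assms by (auto simp: primitive_def alphabet_def)
next
  case True
  have "(\<forall>a\<in>alphabet D. \<forall>c\<in>alphabet D. 0 < mat_pow (alphabet D) (subst_matrix D W) k a c)
        \<longleftrightarrow> spin_connected D W k" for k
  proof
    assume pos: "\<forall>a\<in>alphabet D. \<forall>c\<in>alphabet D. 0 < mat_pow (alphabet D) (subst_matrix D W) k a c"
    show "spin_connected D W k"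
      unfolding spin_connected_def
    proof (intro ballI set_eqI iffI UNIV_I)
      fix d0 d and g :: 'g assume "d0 \<in> D" "d \<in> D"
      then have "(0, d0) \<in> alphabet D" "(g, d) \<in> alphabet D"
        by (auto simp: alphabet_def)
      with pos show "g \<in> walk_spins D W k d0 d"
        using mat_pow_subst_matrix_pos_iff[OF True, of "(g, d)" "(0, d0)" W k] by simp
    qed
  next
    assume "spin_connected D W k"
    then show "\<forall>a\<in>alphabet D. \<forall>c\<in>alphabet D. 0 < mat_pow (alphabet D) (subst_matrix D W) k a c"
      using mat_pow_subst_matrix_pos_iff[OF True, of _ _ W k]
      by (auto simp: spin_connected_def alphabet_def)
  qed
  then show ?thesis
    using True by (simp add: primitive_def)
qed

lemma spin_connected_Suc:
  fixes W :: "'d \<Rightarrow> 'd \<Rightarrow> 'g::group_add"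
  assumes "D \<noteq> {}" and "spin_connected D W k"
  shows "spin_connected D W (Suc k)"
  using assms by (auto simp: spin_connected_def)

lemma spin_connected_mono:
  fixes W :: "'d \<Rightarrow> 'd \<Rightarrow> 'g::group_add"
  assumes "D \<noteq> {}" and "spin_connected D W k" and "k \<le> k'"
  shows "spin_connected D W k'"
  using assms(3,2) by (induction k' rule: dec_induct) (simp_all add: spin_connected_Suc[OF assms(1)])

lemma walk_spins_reindex:
  assumes "inj_on \<phi> D" and "\<forall>d\<in>D. \<forall>e\<in>D. W d e = V (\<phi> d) (\<phi> e)"
    and "d0 \<in> D" and "d \<in> D"
  shows "walk_spins D W k d0 d = walk_spins (\<phi> ` D) V k (\<phi> d0) (\<phi> d)"
  using assms(4)
proof (induction k arbitrary: d)
  case 0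
  then show ?case
    using assms(1,3) by (auto dest: inj_onD)
next
  case (Suc k)
  then show ?case
    using assms(2) by auto
qed

lemma spin_connected_reindex:
  assumes "inj_on \<phi> D" and "\<forall>d\<in>D. \<forall>e\<in>D. W d e = V (\<phi> d) (\<phi> e)"
  shows "spin_connected D W k \<longleftrightarrow> spin_connected (\<phi> ` D) V k"
  by (simp add: spin_connected_def walk_spins_reindex[OF assms])

definition spin_tensor ::
    "('d1 \<Rightarrow> 'd1 \<Rightarrow> 'g1) \<Rightarrow> ('d2 \<Rightarrow> 'd2 \<Rightarrow> 'g2) \<Rightarrow> 'd1 \<times> 'd2 \<Rightarrow> 'd1 \<times> 'd2 \<Rightarrow> 'g1 \<times> 'g2" where
  "spin_tensor W1 W2 x y = (W1 (fst x) (fst y), W2 (snd x) (snd y))"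

lemma walk_spins_tensor:
  fixes W1 :: "'d1 \<Rightarrow> 'd1 \<Rightarrow> 'g1::monoid_add" and W2 :: "'d2 \<Rightarrow> 'd2 \<Rightarrow> 'g2::monoid_add"
  shows "walk_spins (D1 \<times> D2) (spin_tensor W1 W2) k x y =
         walk_spins D1 W1 k (fst x) (fst y) \<times> walk_spins D2 W2 k (snd x) (snd y)"
proof (induction k arbitrary: y)
  case 0
  then show ?case
    by (auto simp: prod_eq_iff mem_Times_iff)
next
  case (Suc k)
  have translate: "(\<lambda>g. g + (u, v)) ` (A \<times> B) = (\<lambda>g. g + u) ` A \<times> (\<lambda>g. g + v) ` B"
    for u :: 'g1 and v :: 'g2 and A B
  proof -
    have "(\<lambda>g. g + (u, v)) = map_prod (\<lambda>g. g + u) (\<lambda>g. g + v)"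
      by (simp add: fun_eq_iff prod_eq_iff)
    then show ?thesis
      by (simp only: map_prod_surj_on)
  qed
  show ?case
    unfolding walk_spins.simps(2) Suc.IH
    using UN_Times_distrib[of "\<lambda>z. (\<lambda>g. g + W1 z (fst y)) ` walk_spins D1 W1 k (fst x) z"
        "\<lambda>z. (\<lambda>g. g + W2 z (snd y)) ` walk_spins D2 W2 k (snd x) z" D1 D2]
    by (simp add: spin_tensor_def translate mem_Times_iff case_prod_beta')
qed

lemma spin_connected_tensor_iff:
  fixes W1 :: "'d1 \<Rightarrow> 'd1 \<Rightarrow> 'g1::monoid_add" and W2 :: "'d2 \<Rightarrow> 'd2 \<Rightarrow> 'g2::monoid_add"
  assumes "D1 \<noteq> {}" and "D2 \<noteq> {}"
  shows "spin_connected (D1 \<times> D2) (spin_tensor W1 W2) k \<longleftrightarrow>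
         spin_connected D1 W1 k \<and> spin_connected D2 W2 k"
proof -
  have Times_eq_UNIV: "A \<times> B = UNIV \<longleftrightarrow> A = UNIV \<and> B = UNIV" for A :: "'g1 set" and B :: "'g2 set"
    by auto
  show ?thesis
    using assms by (auto simp: spin_connected_def walk_spins_tensor Times_eq_UNIV)
qed

lemma primitive_tensor_iff:
  fixes W1 :: "'d1 \<Rightarrow> 'd1 \<Rightarrow> 'g1::{finite,ab_group_add}"
    and W2 :: "'d2 \<Rightarrow> 'd2 \<Rightarrow> 'g2::{finite,ab_group_add}"
    and W :: "'d \<Rightarrow> 'd \<Rightarrow> 'g1 \<times> 'g2"
  assumes \<phi>: "bij_betw \<phi> D (D1 \<times> D2)" and "D1 \<noteq> {}" and "D2 \<noteq> {}"
    and W: "\<forall>d\<in>D. \<forall>e\<in>D. W d e = spin_tensor W1 W2 (\<phi> d) (\<phi> e)"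
  shows "primitive D W \<longleftrightarrow> primitive D1 W1 \<and> primitive D2 W2"
proof -
  have "inj_on \<phi> D" and image: "\<phi> ` D = D1 \<times> D2"
    using \<phi> by (auto simp: bij_betw_def)
  then have "D \<noteq> {}"
    using assms(2,3) by auto
  have connected: "spin_connected D W k \<longleftrightarrow> spin_connected D1 W1 k \<and> spin_connected D2 W2 k" for k
  proof -
    have "spin_connected D W k \<longleftrightarrow> spin_connected (\<phi> ` D) (spin_tensor W1 W2) k"
      by (rule spin_connected_reindex[OF \<open>inj_on \<phi> D\<close> W])
    also have "\<dots> \<longleftrightarrow> spin_connected D1 W1 k \<and> spin_connected D2 W2 k"
      unfolding image by (rule spin_connected_tensor_iff[OF assms(2,3)])
    finally show ?thesis .
  qed
  have "finite D \<longleftrightarrow> finite D1 \<and> finite D2"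
    using bij_betw_finite[OF \<phi>] finite_cartesian_product_iff[of D1 D2] assms(2,3) by simp
  moreover have "(\<exists>k\<ge>1. spin_connected D W k) \<longleftrightarrow>
      (\<exists>k\<ge>1. spin_connected D1 W1 k) \<and> (\<exists>k\<ge>1. spin_connected D2 W2 k)"
  proof
    assume "(\<exists>k\<ge>1. spin_connected D1 W1 k) \<and> (\<exists>k\<ge>1. spin_connected D2 W2 k)"
    then obtain k1 k2 where "k1 \<ge> 1" "spin_connected D1 W1 k1" "spin_connected D2 W2 k2"
      by blast
    then have "spin_connected D W (max k1 k2)"
      using connected spin_connected_mono[OF assms(2) _ max.cobounded1]
        spin_connected_mono[OF assms(3) _ max.cobounded2] by blast
    then show "\<exists>k\<ge>1. spin_connected D W k"
      using \<open>k1 \<ge> 1\<close> by (intro exI[of _ "max k1 k2"]) simp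
  qed (auto simp: connected)
  ultimately show ?thesis
    by (simp only: primitive_iff_spin_connected[OF \<open>D \<noteq> {}\<close>, of W]
      primitive_iff_spin_connected[OF assms(2), of W1] primitive_iff_spin_connected[OF assms(3), of W2]) blast
qed

definition kronecker ::
    "('d1 \<Rightarrow> 'd1 \<Rightarrow> 'a::times) \<Rightarrow> ('d2 \<Rightarrow> 'd2 \<Rightarrow> 'a) \<Rightarrow> 'd1 \<times> 'd2 \<Rightarrow> 'd1 \<times> 'd2 \<Rightarrow> 'a" where
  "kronecker A1 A2 x y = A1 (fst x) (fst y) * A2 (snd x) (snd y)"

lemma chi_matrix_char_tensor:
  assumes "\<forall>d\<in>D. \<forall>e\<in>D. W d e = spin_tensor W1 W2 (\<phi> d) (\<phi> e)" and "d \<in> D" and "e \<in> D"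
  shows "chi_matrix (char_tensor chi1 chi2) W d e =
         kronecker (chi_matrix chi1 W1) (chi_matrix chi2 W2) (\<phi> d) (\<phi> e)"
  using assms by (simp add: chi_matrix_def char_tensor_def spin_tensor_def kronecker_def)

lemma character_char_tensor:
  assumes "character chi1" and "character chi2"
  shows "character (char_tensor chi1 chi2)"
  using assms by (simp add: character_def char_tensor_def norm_mult)

lemma kronecker_transpose:
  "(\<lambda>x y. kronecker A1 A2 y x) = kronecker (\<lambda>d e. A1 e d) (\<lambda>d e. A2 e d)"
  by (simp add: fun_eq_iff kronecker_def)

lemma norm_chi_matrix:
  "character chi \<Longrightarrow> cmod (chi_matrix chi W d e) = 1"
  by (simp add: character_def chi_matrix_def)

lemma chi_matrix_nonzero:
  "character chi \<Longrightarrow> chi_matrix chi W d e \<noteq> 0"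
  using norm_chi_matrix[of chi W d e] by auto

definition row_inner :: "'d set \<Rightarrow> ('d \<Rightarrow> 'd \<Rightarrow> complex) \<Rightarrow> 'd \<Rightarrow> 'd \<Rightarrow> complex" where
  "row_inner D A d d' = (\<Sum>e\<in>D. A d e * cnj (A d' e))"

definition orthogonal_rows :: "'d set \<Rightarrow> ('d \<Rightarrow> 'd \<Rightarrow> complex) \<Rightarrow> bool" where
  "orthogonal_rows D A \<longleftrightarrow> (\<forall>d\<in>D. \<forall>d'\<in>D. d \<noteq> d' \<longrightarrow> row_inner D A d d' = 0)"

lemma row_inner_self_unimodular:
  assumes "\<forall>e\<in>D. cmod (A d e) = 1"
  shows "row_inner D A d d = of_nat (card D)"
proof -
  have "A d e * cnj (A d e) = 1" if "e \<in> D" for e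
    using assms that complex_norm_square[of "A d e"] by simp
  then show ?thesis
    by (simp add: row_inner_def)
qed

lemma unitary_on_scaled_iff:
  assumes "finite D" and unimodular: "\<forall>d\<in>D. \<forall>e\<in>D. cmod (A d e) = 1"
  shows "unitary_on D (\<lambda>d e. A d e / complex_of_real (sqrt (real (card D)))) \<longleftrightarrow>
         orthogonal_rows D A \<and> orthogonal_rows D (\<lambda>d e. A e d)"
proof (cases "D = {}")
  case True
  then show ?thesis
    by (simp add: unitary_on_def orthogonal_rows_def)
next
  case False
  define s where "s = complex_of_real (sqrt (real (card D)))"
  have "cnj s * s = of_nat (card D)"
    by (simp add: s_def flip: of_real_mult)
  then have rows: "(\<Sum>e\<in>D. A d e / s * cnj (A d' e / s)) = row_inner D A d d' / of_nat (card D)"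
    and cols: "(\<Sum>e\<in>D. cnj (A e d / s) * (A e d' / s)) =
               row_inner D (\<lambda>d e. A e d) d' d / of_nat (card D)" for d d'
    by (simp_all add: row_inner_def sum_divide_distrib mult.commute)
  have "of_nat (card D) \<noteq> (0::complex)"
    using False assms(1) by simp
  then have orthonormal: "(\<forall>d\<in>D. \<forall>d'\<in>D. row_inner D B d d' / of_nat (card D) = (if d = d' then 1 else 0))
      \<longleftrightarrow> orthogonal_rows D B" if "\<forall>d\<in>D. \<forall>e\<in>D. cmod (B d e) = 1" for B
    using row_inner_self_unimodular[of D B] that by (auto simp: orthogonal_rows_def)
  have "(\<forall>d\<in>D. \<forall>d'\<in>D. row_inner D (\<lambda>d e. A e d) d' d / of_nat (card D) = (if d = d' then 1 else 0))
      \<longleftrightarrow> (\<forall>d\<in>D. \<forall>d'\<in>D. row_inner D (\<lambda>d e. A e d) d d' / of_nat (card D) = (if d = d' then 1 else 0))"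
    by (metis (no_types, lifting))
  then show ?thesis
    unfolding unitary_on_def s_def[symmetric] rows cols
    using orthonormal[of A] orthonormal[of "\<lambda>d e. A e d"] unimodular by simp
qed

lemma unitary_on_imp_finite:
  assumes "unitary_on D U" and "D \<noteq> {}"
  shows "finite D"
proof (rule ccontr)
  assume "infinite D"
  obtain d where "d \<in> D"
    using assms(2) by blast
  then have "(\<Sum>e\<in>D. U d e * cnj (U d e)) = 1"
    using assms(1) by (simp add: unitary_on_def)
  with \<open>infinite D\<close> show False
    by simp
qed

lemma unitary_on_reindex:
  assumes "inj_on \<phi> D" and "\<forall>d\<in>D. \<forall>e\<in>D. U d e = V (\<phi> d) (\<phi> e)"
  shows "unitary_on D U \<longleftrightarrow> unitary_on (\<phi> ` D) V"
  using assms by (simp add: unitary_on_def sum.reindex inj_on_eq_iff cong: sum.cong)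

lemma row_inner_kronecker:
  "row_inner (D1 \<times> D2) (kronecker A1 A2) x y =
   row_inner D1 A1 (fst x) (fst y) * row_inner D2 A2 (snd x) (snd y)"
  by (simp add: row_inner_def kronecker_def sum_product sum.cartesian_product' algebra_simps)

lemma orthogonal_rows_kronecker_iff:
  assumes "finite D1" "finite D2" "D1 \<noteq> {}" "D2 \<noteq> {}"
    and "\<forall>d\<in>D1. \<forall>e\<in>D1. cmod (A1 d e) = 1" and "\<forall>d\<in>D2. \<forall>e\<in>D2. cmod (A2 d e) = 1"
  shows "orthogonal_rows (D1 \<times> D2) (kronecker A1 A2) \<longleftrightarrow>
         orthogonal_rows D1 A1 \<and> orthogonal_rows D2 A2"
proof
  assume orth: "orthogonal_rows (D1 \<times> D2) (kronecker A1 A2)"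
  obtain a0 b0 where "a0 \<in> D1" "b0 \<in> D2"
    using assms(3,4) by blast
  have "row_inner D1 A1 a0 a0 \<noteq> 0" "row_inner D2 A2 b0 b0 \<noteq> 0"
    using row_inner_self_unimodular[of D1 A1 a0] row_inner_self_unimodular[of D2 A2 b0]
      assms \<open>a0 \<in> D1\<close> \<open>b0 \<in> D2\<close> by auto
  moreover have "row_inner D1 A1 a a' * row_inner D2 A2 b b' = 0"
    if "a \<in> D1" "a' \<in> D1" "b \<in> D2" "b' \<in> D2" "(a, b) \<noteq> (a', b')" for a a' b b'
    using orth that row_inner_kronecker[of D1 D2 A1 A2 "(a, b)" "(a', b')"]
    by (simp add: orthogonal_rows_def)
  ultimately show "orthogonal_rows D1 A1 \<and> orthogonal_rows D2 A2"
    using \<open>a0 \<in> D1\<close> \<open>b0 \<in> D2\<close> unfolding orthogonal_rows_def by (metis mult_eq_0_iff prod.inject)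
next
  assume "orthogonal_rows D1 A1 \<and> orthogonal_rows D2 A2"
  then show "orthogonal_rows (D1 \<times> D2) (kronecker A1 A2)"
    by (auto simp: orthogonal_rows_def row_inner_kronecker prod_eq_iff)
qed

lemma unitary_kronecker_iff:
  assumes "D1 \<noteq> {}" "D2 \<noteq> {}"
    and unimodular1: "\<forall>d\<in>D1. \<forall>e\<in>D1. cmod (A1 d e) = 1"
    and unimodular2: "\<forall>d\<in>D2. \<forall>e\<in>D2. cmod (A2 d e) = 1"
  shows "unitary_on (D1 \<times> D2)
           (\<lambda>x y. kronecker A1 A2 x y / complex_of_real (sqrt (real (card (D1 \<times> D2))))) \<longleftrightarrow>
         unitary_on D1 (\<lambda>d e. A1 d e / complex_of_real (sqrt (real (card D1)))) \<and>
         unitary_on D2 (\<lambda>d e. A2 d e / complex_of_real (sqrt (real (card D2))))"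
proof (cases "finite D1 \<and> finite D2")
  case True
  have "\<forall>x\<in>D1 \<times> D2. \<forall>y\<in>D1 \<times> D2. cmod (kronecker A1 A2 x y) = 1"
    using unimodular1 unimodular2 by (auto simp: kronecker_def norm_mult)
  then have "unitary_on (D1 \<times> D2)
      (\<lambda>x y. kronecker A1 A2 x y / complex_of_real (sqrt (real (card (D1 \<times> D2))))) \<longleftrightarrow>
      orthogonal_rows (D1 \<times> D2) (kronecker A1 A2) \<and>
      orthogonal_rows (D1 \<times> D2) (\<lambda>x y. kronecker A1 A2 y x)"
    using True by (intro unitary_on_scaled_iff) auto
  also have "\<dots> \<longleftrightarrow> (orthogonal_rows D1 A1 \<and> orthogonal_rows D2 A2) \<and>
      (orthogonal_rows D1 (\<lambda>d e. A1 e d) \<and> orthogonal_rows D2 (\<lambda>d e. A2 e d))"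
    unfolding kronecker_transpose using True assms by (simp add: orthogonal_rows_kronecker_iff)
  also have "\<dots> \<longleftrightarrow> unitary_on D1 (\<lambda>d e. A1 d e / complex_of_real (sqrt (real (card D1)))) \<and>
      unitary_on D2 (\<lambda>d e. A2 d e / complex_of_real (sqrt (real (card D2))))"
    using True unimodular1 unimodular2 by (simp add: unitary_on_scaled_iff) blast
  finally show ?thesis .
next
  case False
  then have "infinite (D1 \<times> D2)"
    using assms(1,2) by (auto dest: finite_cartesian_productD1 finite_cartesian_productD2)
  moreover have "D1 \<times> D2 \<noteq> {}"
    using assms(1,2) by simp
  ultimately have "\<not> unitary_on (D1 \<times> D2) U" for U
    using unitary_on_imp_finite by blast
  moreover have "\<not> (unitary_on D1 U1 \<and> unitary_on D2 U2)" for U1 U2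
    using False unitary_on_imp_finite[of D1 U1] unitary_on_imp_finite[of D2 U2] assms(1,2) by blast
  ultimately show ?thesis
    by blast
qed

lemma chi_unitary_tensor_iff:
  fixes W :: "'d \<Rightarrow> 'd \<Rightarrow> 'g1::ab_group_add \<times> 'g2::ab_group_add"
  assumes \<phi>: "bij_betw \<phi> D (D1 \<times> D2)" and "D1 \<noteq> {}" and "D2 \<noteq> {}"
    and W: "\<forall>d\<in>D. \<forall>e\<in>D. W d e = spin_tensor W1 W2 (\<phi> d) (\<phi> e)"
    and "character chi1" and "character chi2"
  shows "chi_unitary D W (char_tensor chi1 chi2) \<longleftrightarrow>
         chi_unitary D1 W1 chi1 \<and> chi_unitary D2 W2 chi2"
proof -
  have "inj_on \<phi> D" and image: "\<phi> ` D = D1 \<times> D2"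
    using \<phi> by (auto simp: bij_betw_def)
  have "card D = card (D1 \<times> D2)"
    using \<phi> by (rule bij_betw_same_card)
  have "chi_unitary D W (char_tensor chi1 chi2) \<longleftrightarrow>
      unitary_on (\<phi> ` D) (\<lambda>x y. kronecker (chi_matrix chi1 W1) (chi_matrix chi2 W2) x y /
                                   complex_of_real (sqrt (real (card (D1 \<times> D2)))))"
    unfolding chi_unitary_def
    by (rule unitary_on_reindex[OF \<open>inj_on \<phi> D\<close>])
      (simp add: chi_matrix_char_tensor[OF W] \<open>card D = card (D1 \<times> D2)\<close>)
  also have "\<dots> \<longleftrightarrow> chi_unitary D1 W1 chi1 \<and> chi_unitary D2 W2 chi2"
    unfolding image chi_unitary_def
    by (rule unitary_kronecker_iff) (simp_all add: assms norm_chi_matrix)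
  finally show ?thesis .
qed

interpretation cfun: vector_space "\<lambda>(c::complex) (f::'d \<Rightarrow> complex) x. c * f x"
  by unfold_locales (auto simp: fun_eq_iff algebra_simps)

definition minors2_vanish :: "'d set \<Rightarrow> ('d \<Rightarrow> 'd \<Rightarrow> 'a::times) \<Rightarrow> bool" where
  "minors2_vanish D A \<longleftrightarrow>
     (\<forall>d\<in>D. \<forall>d'\<in>D. \<forall>e\<in>D. \<forall>e'\<in>D. A d e * A d' e' = A d e' * A d' e)"

lemma rank_on_eq_1_iff:
  assumes nonzero: "\<forall>d\<in>D. \<forall>e\<in>D. A d e \<noteq> 0"
  shows "rank_on D A = 1 \<longleftrightarrow> D \<noteq> {} \<and> minors2_vanish D A"
proof -
  define col where "col e = (\<lambda>d. if d \<in> D then A d e else 0)" for e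
  have rank: "rank_on D A = cfun.dim (col ` D)"
    by (simp add: rank_on_def col_def)
  show ?thesis
  proof
    assume "rank_on D A = 1"
    then obtain B where B: "B \<subseteq> col ` D" "col ` D \<subseteq> cfun.span B" "card B = 1"
      using cfun.basis_exists[of "col ` D"] rank by metis
    then obtain v where "B = {v}"
      by (meson card_1_singletonE)
    have multiple: "\<exists>k. col e = (\<lambda>x. k * v x)" if "e \<in> D" for e
      using B(2) that unfolding \<open>B = {v}\<close> cfun.span_singleton by blast
    have "D \<noteq> {}"
      using B(1,3) by auto
    moreover have "minors2_vanish D A"
      unfolding minors2_vanish_def
    proof (intro ballI)
      fix d d' e e' assume "d \<in> D" "d' \<in> D" "e \<in> D" "e' \<in> D"
      with multiple obtain k k' where "col e = (\<lambda>x. k * v x)" "col e' = (\<lambda>x. k' * v x)"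
        by meson
      then have "A d e = k * v d" "A d' e = k * v d'" "A d e' = k' * v d" "A d' e' = k' * v d'"
        using \<open>d \<in> D\<close> \<open>d' \<in> D\<close> unfolding col_def fun_eq_iff by metis+
      then show "A d e * A d' e' = A d e' * A d' e"
        by simp
    qed
    ultimately show "D \<noteq> {} \<and> minors2_vanish D A" ..
  next
    assume "D \<noteq> {} \<and> minors2_vanish D A"
    then obtain e0 where "e0 \<in> D" and minors: "minors2_vanish D A"
      by blast
    have "col e0 \<noteq> 0"
      using nonzero \<open>e0 \<in> D\<close> by (auto simp: col_def fun_eq_iff)
    have "col e = (\<lambda>x. A e0 e / A e0 e0 * col e0 x)" if "e \<in> D" for e
    proof
      fix x
      show "col e x = A e0 e / A e0 e0 * col e0 x"
      proof (cases "x \<in> D")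
        case True
        then have "A x e * A e0 e0 = A x e0 * A e0 e"
          using minors \<open>e0 \<in> D\<close> that by (simp add: minors2_vanish_def)
        then show ?thesis
          using True nonzero \<open>e0 \<in> D\<close> by (simp add: col_def field_simps)
      qed (simp add: col_def)
    qed
    then have "col ` D \<subseteq> cfun.span {col e0}"
      unfolding cfun.span_singleton by blast
    then have "cfun.dim (col ` D) = 1"
      using \<open>e0 \<in> D\<close> \<open>col e0 \<noteq> 0\<close> by (intro cfun.dim_unique[of "{col e0}"]) auto
    then show "rank_on D A = 1"
      using rank by simp
  qed
qed

lemma chi_rank1_iff:
  assumes "character chi"
  shows "chi_rank1 D W chi \<longleftrightarrow> D \<noteq> {} \<and> minors2_vanish D (chi_matrix chi W)"
  unfolding chi_rank1_def by (rule rank_on_eq_1_iff) (simp add: chi_matrix_nonzero assms)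

lemma minors2_vanish_reindex:
  assumes "\<forall>d\<in>D. \<forall>e\<in>D. A d e = B (\<phi> d) (\<phi> e)"
  shows "minors2_vanish D A \<longleftrightarrow> minors2_vanish (\<phi> ` D) B"
  using assms by (simp add: minors2_vanish_def)

lemma minors2_vanish_kronecker_iff:
  fixes A1 :: "'d1 \<Rightarrow> 'd1 \<Rightarrow> 'a::field" and A2 :: "'d2 \<Rightarrow> 'd2 \<Rightarrow> 'a"
  assumes "D1 \<noteq> {}" "D2 \<noteq> {}"
    and nonzero1: "\<forall>d\<in>D1. \<forall>e\<in>D1. A1 d e \<noteq> 0" and nonzero2: "\<forall>d\<in>D2. \<forall>e\<in>D2. A2 d e \<noteq> 0"
  shows "minors2_vanish (D1 \<times> D2) (kronecker A1 A2) \<longleftrightarrow>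
         minors2_vanish D1 A1 \<and> minors2_vanish D2 A2"
proof
  assume minors: "minors2_vanish (D1 \<times> D2) (kronecker A1 A2)"
  obtain a0 b0 where "a0 \<in> D1" "b0 \<in> D2"
    using assms(1,2) by blast
  have "A1 a b * A1 a' b' = A1 a b' * A1 a' b"
    if "a \<in> D1" "a' \<in> D1" "b \<in> D1" "b' \<in> D1" for a a' b b'
  proof -
    have "(A1 a b * A1 a' b') * (A2 b0 b0 * A2 b0 b0) = (A1 a b' * A1 a' b) * (A2 b0 b0 * A2 b0 b0)"
      using minors[unfolded minors2_vanish_def, rule_format, of "(a, b0)" "(a', b0)" "(b, b0)" "(b', b0)"]
        that \<open>b0 \<in> D2\<close> by (simp add: kronecker_def ac_simps)
    then show ?thesis
      using nonzero2 \<open>b0 \<in> D2\<close> by simp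
  qed
  moreover have "A2 a b * A2 a' b' = A2 a b' * A2 a' b"
    if "a \<in> D2" "a' \<in> D2" "b \<in> D2" "b' \<in> D2" for a a' b b'
  proof -
    have "(A2 a b * A2 a' b') * (A1 a0 a0 * A1 a0 a0) = (A2 a b' * A2 a' b) * (A1 a0 a0 * A1 a0 a0)"
      using minors[unfolded minors2_vanish_def, rule_format, of "(a0, a)" "(a0, a')" "(a0, b)" "(a0, b')"]
        that \<open>a0 \<in> D1\<close> by (simp add: kronecker_def ac_simps)
    then show ?thesis
      using nonzero1 \<open>a0 \<in> D1\<close> by simp
  qed
  ultimately show "minors2_vanish D1 A1 \<and> minors2_vanish D2 A2"
    by (simp add: minors2_vanish_def)
next
  assume "minors2_vanish D1 A1 \<and> minors2_vanish D2 A2"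
  then have minors1: "minors2_vanish D1 A1" and minors2: "minors2_vanish D2 A2"
    by blast+
  show "minors2_vanish (D1 \<times> D2) (kronecker A1 A2)"
    unfolding minors2_vanish_def
  proof (intro ballI)
    fix x x' y y' assume "x \<in> D1 \<times> D2" "x' \<in> D1 \<times> D2" "y \<in> D1 \<times> D2" "y' \<in> D1 \<times> D2"
    then have "A1 (fst x) (fst y) * A1 (fst x') (fst y') = A1 (fst x) (fst y') * A1 (fst x') (fst y)"
      and "A2 (snd x) (snd y) * A2 (snd x') (snd y') = A2 (snd x) (snd y') * A2 (snd x') (snd y)"
      using minors1 minors2 unfolding minors2_vanish_def mem_Times_iff by blast+
    then have "(A1 (fst x) (fst y) * A1 (fst x') (fst y')) * (A2 (snd x) (snd y) * A2 (snd x') (snd y')) =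
        (A1 (fst x) (fst y') * A1 (fst x') (fst y)) * (A2 (snd x) (snd y') * A2 (snd x') (snd y))"
      by simp
    then show "kronecker A1 A2 x y * kronecker A1 A2 x' y' = kronecker A1 A2 x y' * kronecker A1 A2 x' y"
      by (simp add: kronecker_def ac_simps)
  qed
qed

lemma chi_rank1_tensor_iff:
  fixes W :: "'d \<Rightarrow> 'd \<Rightarrow> 'g1::ab_group_add \<times> 'g2::ab_group_add"
  assumes \<phi>: "bij_betw \<phi> D (D1 \<times> D2)" and "D1 \<noteq> {}" and "D2 \<noteq> {}"
    and W: "\<forall>d\<in>D. \<forall>e\<in>D. W d e = spin_tensor W1 W2 (\<phi> d) (\<phi> e)"
    and "character chi1" and "character chi2"
  shows "chi_rank1 D W (char_tensor chi1 chi2) \<longleftrightarrow> chi_rank1 D1 W1 chi1 \<and> chi_rank1 D2 W2 chi2"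
proof -
  have image: "\<phi> ` D = D1 \<times> D2"
    using \<phi> by (simp add: bij_betw_def)
  then have "D \<noteq> {}"
    using assms(2,3) by auto
  have "chi_rank1 D W (char_tensor chi1 chi2) \<longleftrightarrow> minors2_vanish D (chi_matrix (char_tensor chi1 chi2) W)"
    using \<open>D \<noteq> {}\<close> by (simp add: chi_rank1_iff character_char_tensor assms(5,6))
  also have "\<dots> \<longleftrightarrow> minors2_vanish (D1 \<times> D2) (kronecker (chi_matrix chi1 W1) (chi_matrix chi2 W2))"
    unfolding image[symmetric] using W by (intro minors2_vanish_reindex) (simp add: chi_matrix_char_tensor)
  also have "\<dots> \<longleftrightarrow> minors2_vanish D1 (chi_matrix chi1 W1) \<and> minors2_vanish D2 (chi_matrix chi2 W2)"
    by (rule minors2_vanish_kronecker_iff) (simp_all add: assms chi_matrix_nonzero)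
  also have "\<dots> \<longleftrightarrow> chi_rank1 D1 W1 chi1 \<and> chi_rank1 D2 W2 chi2"
    using assms(2,3) by (simp add: chi_rank1_iff assms(5,6))
  finally show ?thesis .
qed

lemma digit_system_nonempty: "digit_system Q D \<Longrightarrow> D \<noteq> {}"
  unfolding digit_system_def complete_residue_system_def by blast

theorem proposition5p3:
  fixes Q1 :: "int^'m1^'m1" and D1 :: "(int^'m1) set"
    and W1 :: "int^'m1 \<Rightarrow> int^'m1 \<Rightarrow> 'g1::{finite,ab_group_add}"
    and Q2 :: "int^'m2^'m2" and D2 :: "(int^'m2) set"
    and W2 :: "int^'m2 \<Rightarrow> int^'m2 \<Rightarrow> 'g2::{finite,ab_group_add}"
    and Q :: "int^'m^'m" and D :: "(int^'m) set"
    and W :: "int^'m \<Rightarrow> int^'m \<Rightarrow> 'g1 \<times> 'g2"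
    and \<phi> :: "int^'m \<Rightarrow> (int^'m1) \<times> (int^'m2)"
  assumes "digit_system Q1 D1" and "digit_system Q2 D2" and "digit_system Q D"
    and "card D = card D1 * card D2"
    and "bij_betw \<phi> D (D1 \<times> D2)"
    and "\<forall>d\<in>D. \<forall>d'\<in>D. W d d' =
           (W1 (fst (\<phi> d)) (fst (\<phi> d')), W2 (snd (\<phi> d)) (snd (\<phi> d')))"
  shows "(primitive D W \<longleftrightarrow> primitive D1 W1 \<and> primitive D2 W2) \<and>
         (\<forall>chi1 chi2. character chi1 \<and> character chi2 \<longrightarrow>
            (chi_unitary D W (char_tensor chi1 chi2) \<longleftrightarrow> chi_unitary D1 W1 chi1 \<and> chi_unitary D2 W2 chi2) \<and>
            (chi_rank1 D W (char_tensor chi1 chi2) \<longleftrightarrow> chi_rank1 D1 W1 chi1 \<and> chi_rank1 D2 W2 chi2))"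
proof -
  have nonempty: "D1 \<noteq> {}" "D2 \<noteq> {}"
    using assms(1,2) by (simp_all add: digit_system_nonempty)
  have W: "\<forall>d\<in>D. \<forall>e\<in>D. W d e = spin_tensor W1 W2 (\<phi> d) (\<phi> e)"
    using assms(6) by (simp add: spin_tensor_def)
  show ?thesis
    using primitive_tensor_iff[OF assms(5) nonempty W] chi_unitary_tensor_iff[OF assms(5) nonempty W]
      chi_rank1_tensor_iff[OF assms(5) nonempty W]
    by blast
qed

end
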